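(* Let $P$ be a $\sigma$-liminf-centered poset. Then $P$ does not add a dominating real. In fact, $P$ preserves unboundedness of all subsets of $\omega^\omega$: if $F\subset\omega^\omega$ is unbounded in the modulo-finite domination order, then $P$ forces that $F$ remains unbounded.
   Context: For a poset $P$, a set $A\subset P$ is liminf centered if for every sequence $\langle p_i\colon i\in\omega\rangle$ of elements of $A$ there is $q\in P$ such that for every $r\leq q$ the set $\{i\in\omega\colon p_i$ is compatible with $r\}$ is infinite. $P$ is $\sigma$-liminf-centered if it is a countable union of liminf centered sets. A dominating real is an element of $\omega^\omega$ in the extension dominating modulo finite every ground model element of $\omega^\omega$. *)

theory Defs
  imports Main
begin

text \<open>A forcing poset is given by a carrier set P and an order le (le q p: q is stronger than p).\<close>

definition is_poset :: "'a set \<Rightarrow> ('a \<Rightarrow> 'a \<Rightarrow> bool) \<Rightarrow> bool" where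
  "is_poset P le \<longleftrightarrow> (\<forall>p\<in>P. le p p)
     \<and> (\<forall>p\<in>P. \<forall>q\<in>P. \<forall>r\<in>P. le p q \<longrightarrow> le q r \<longrightarrow> le p r)
     \<and> (\<forall>p\<in>P. \<forall>q\<in>P. le p q \<longrightarrow> le q p \<longrightarrow> p = q)"

definition compat :: "'a set \<Rightarrow> ('a \<Rightarrow> 'a \<Rightarrow> bool) \<Rightarrow> 'a \<Rightarrow> 'a \<Rightarrow> bool" where
  "compat P le p q \<longleftrightarrow> (\<exists>s\<in>P. le s p \<and> le s q)"

definition liminf_centered :: "'a set \<Rightarrow> ('a \<Rightarrow> 'a \<Rightarrow> bool) \<Rightarrow> 'a set \<Rightarrow> bool" where
  "liminf_centered P le A \<longleftrightarrow> A \<subseteq> P \<and>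
     (\<forall>ps :: nat \<Rightarrow> 'a. (\<forall>i. ps i \<in> A) \<longrightarrow>
        (\<exists>q\<in>P. \<forall>r\<in>P. le r q \<longrightarrow> infinite {i. compat P le (ps i) r}))"

definition sigma_liminf_centered :: "'a set \<Rightarrow> ('a \<Rightarrow> 'a \<Rightarrow> bool) \<Rightarrow> bool" where
  "sigma_liminf_centered P le \<longleftrightarrow>
     (\<exists>C :: nat \<Rightarrow> 'a set. P = (\<Union>i. C i) \<and> (\<forall>i. liminf_centered P le (C i)))"

definition unbounded :: "(nat \<Rightarrow> nat) set \<Rightarrow> bool" where
  "unbounded F \<longleftrightarrow> \<not> (\<exists>g :: nat \<Rightarrow> nat. \<forall>f\<in>F. \<exists>k. \<forall>n\<ge>k. f n \<le> g n)"

text \<open>A P-name for an element of omega^omega, coded by its decision sets: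
  D n m is a set of conditions each forcing "x(n) = m". Every name for a real yields such a D (take D n m to be the
  set of conditions forcing x(n) = m), and every such D is realised by a name
  (the name whose value at n is m iff the generic meets D n m).\<close>

definition real_name :: "'a set \<Rightarrow> ('a \<Rightarrow> 'a \<Rightarrow> bool) \<Rightarrow> (nat \<Rightarrow> nat \<Rightarrow> 'a set) \<Rightarrow> bool" where
  "real_name P le D \<longleftrightarrow> (\<forall>n m. D n m \<subseteq> P)
     \<and> (\<forall>n m m' p q. p \<in> D n m \<longrightarrow> q \<in> D n m' \<longrightarrow> m \<noteq> m' \<longrightarrow> \<not> compat P le p q)
     \<and> (\<forall>n. \<forall>p\<in>P. \<exists>q\<in>P. le q p \<and> (\<exists>m. q \<in> D n m))"

text \<open>q forces "there are infinitely many n with f(n) > x(n)", i.e. q forces that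
  f is not dominated by the real named by D.\<close>

definition forces_not_dominated ::
  "'a set \<Rightarrow> ('a \<Rightarrow> 'a \<Rightarrow> bool) \<Rightarrow> (nat \<Rightarrow> nat \<Rightarrow> 'a set) \<Rightarrow> 'a \<Rightarrow> (nat \<Rightarrow> nat) \<Rightarrow> bool" where
  "forces_not_dominated P le D q f \<longleftrightarrow>
     (\<forall>k. \<forall>r\<in>P. le r q \<longrightarrow> (\<exists>s\<in>P. le s r \<and> (\<exists>n\<ge>k. \<exists>m<f n. s \<in> D n m)))"

text \<open>P forces "F is unbounded": for every name x for a real, densely many
  conditions force that some f in F is not dominated by x.\<close>

definition preserves_unbounded :: "'a set \<Rightarrow> ('a \<Rightarrow> 'a \<Rightarrow> bool) \<Rightarrow> (nat \<Rightarrow> nat) set \<Rightarrow> bool" where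
  "preserves_unbounded P le F \<longleftrightarrow>
     (\<forall>D. real_name P le D \<longrightarrow>
        (\<forall>p\<in>P. \<exists>q\<in>P. le q p \<and> (\<exists>f\<in>F. forces_not_dominated P le D q f)))"

text \<open>q forces "f \<le>* x": some k such that q forces x(n) \<ge> f(n) for all n \<ge> k.\<close>

definition forces_dominated ::
  "'a set \<Rightarrow> ('a \<Rightarrow> 'a \<Rightarrow> bool) \<Rightarrow> (nat \<Rightarrow> nat \<Rightarrow> 'a set) \<Rightarrow> 'a \<Rightarrow> (nat \<Rightarrow> nat) \<Rightarrow> bool" where
  "forces_dominated P le D q f \<longleftrightarrow>
     (\<exists>k. \<forall>n\<ge>k. \<forall>s\<in>P. le s q \<longrightarrow> (\<forall>m. s \<in> D n m \<longrightarrow> f n \<le> m))"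

text \<open>P adds a dominating real: some condition p forces that the real named by D
  dominates every ground-model real (p forces phi iff densely many below p force phi).\<close>

definition adds_dominating_real :: "'a set \<Rightarrow> ('a \<Rightarrow> 'a \<Rightarrow> bool) \<Rightarrow> bool" where
  "adds_dominating_real P le \<longleftrightarrow>
     (\<exists>D. real_name P le D \<and>
        (\<exists>p\<in>P. \<forall>f :: nat \<Rightarrow> nat. \<forall>r\<in>P. le r p \<longrightarrow>
            (\<exists>q\<in>P. le q r \<and> forces_dominated P le D q f)))"

end

theory Submission
  imports Defs
begin

text \<open>Let x be the real named by D. If a liminf-centered set A contained, for every M, a
  condition p_M forcing x(n) \<ge> M, then a condition q witnessing liminf-centeredness of the
  sequence (p_M) could be extended to decide x(n) = m0 and would still be compatible with some
  p_M with M > m0, which is absurd. Hence every liminf-centered set A yields a ground model real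
  h_A with f <* h_A whenever a condition of A forces f \<le>* x. A single ground model real g
  eventually dominating the countably many h_A then dominates every f that some condition forces
  below x, so every condition forces that an f in F not dominated by g is not dominated by x.\<close>

definition forces_ge :: "'a set \<Rightarrow> ('a \<Rightarrow> 'a \<Rightarrow> bool) \<Rightarrow> (nat \<Rightarrow> nat \<Rightarrow> 'a set) \<Rightarrow> 'a \<Rightarrow> nat \<Rightarrow> nat \<Rightarrow> bool"
  where "forces_ge P le D r n M \<longleftrightarrow> (\<forall>s\<in>P. le s r \<longrightarrow> (\<forall>m. s \<in> D n m \<longrightarrow> M \<le> m))"

lemma forces_dominated_iff:
  "forces_dominated P le D q f \<longleftrightarrow> (\<exists>k. \<forall>n\<ge>k. forces_ge P le D q n (f n))"
  by (simp add: forces_dominated_def forces_ge_def)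

lemma forces_ge_antimono:
  "forces_ge P le D r n M \<Longrightarrow> M' \<le> M \<Longrightarrow> forces_ge P le D r n M'"
  unfolding forces_ge_def by (meson le_trans)

lemma liminf_centered_not_forces_ge:
  assumes po: "is_poset P le" and lc: "liminf_centered P le A" and rn: "real_name P le D"
  shows "\<exists>M. \<forall>r\<in>A. \<not> forces_ge P le D r n M"
proof (rule ccontr)
  assume "\<not> ?thesis"
  then obtain ps where ps: "\<And>M. ps M \<in> A" "\<And>M. forces_ge P le D (ps M) n M"
    by metis
  have transP: "\<And>a b c. a \<in> P \<Longrightarrow> b \<in> P \<Longrightarrow> c \<in> P \<Longrightarrow> le a b \<Longrightarrow> le b c \<Longrightarrow> le a c"
    and reflP: "\<And>a. a \<in> P \<Longrightarrow> le a a"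
    using po unfolding is_poset_def by blast+
  have psP: "ps M \<in> P" for M
    using lc ps(1) unfolding liminf_centered_def by blast
  obtain q where "q \<in> P" and q: "\<forall>r\<in>P. le r q \<longrightarrow> infinite {i. compat P le (ps i) r}"
    using lc ps(1) unfolding liminf_centered_def by blast
  obtain s m0 where s: "s \<in> P" "le s q" "s \<in> D n m0"
    using rn \<open>q \<in> P\<close> unfolding real_name_def by blast
  have "infinite {i. compat P le (ps i) s}"
    using q s by blast
  then obtain M where "M > m0" and "compat P le (ps M) s"
    unfolding finite_nat_set_iff_bounded_le by (metis mem_Collect_eq not_le)
  then obtain t where t: "t \<in> P" "le t (ps M)" "le t s"
    unfolding compat_def by blast
  obtain t' m' where t': "t' \<in> P" "le t' t" "t' \<in> D n m'"
    using rn t(1) unfolding real_name_def by blast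
  have "compat P le s t'"
    unfolding compat_def using t t' s(1) transP reflP by blast
  then have "m' = m0"
    using rn s(3) t'(3) unfolding real_name_def by metis
  moreover have "M \<le> m'"
    using ps(2)[of M] t t' psP transP unfolding forces_ge_def by blast
  ultimately show False
    using \<open>M > m0\<close> by simp
qed

lemma liminf_centered_forced_dominated_bounded:
  assumes "is_poset P le" and "liminf_centered P le A" and "real_name P le D"
  shows "\<exists>h. \<forall>r\<in>A. \<forall>f. forces_dominated P le D r f \<longrightarrow> (\<exists>k. \<forall>n\<ge>k. f n < h n)"
proof -
  obtain h where h: "\<And>n. \<forall>r\<in>A. \<not> forces_ge P le D r n (h n)"
    using liminf_centered_not_forces_ge[OF assms] by metis
  have "\<exists>k. \<forall>n\<ge>k. f n < h n" if "r \<in> A" and "forces_dominated P le D r f" for r f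
  proof -
    obtain k where k: "\<forall>n\<ge>k. forces_ge P le D r n (f n)"
      using \<open>forces_dominated P le D r f\<close> unfolding forces_dominated_iff by blast
    have "f n < h n" if "n \<ge> k" for n
      using h \<open>r \<in> A\<close> k that forces_ge_antimono not_less by metis
    then show ?thesis by blast
  qed
  then show ?thesis by blast
qed

lemma diagonal_dominates:
  fixes h :: "nat \<Rightarrow> nat \<Rightarrow> nat"
  shows "\<exists>g. \<forall>i n. i \<le> n \<longrightarrow> h i n \<le> g n"
proof -
  have "h i n \<le> (\<Sum>j\<le>n. h j n)" if "i \<le> n" for i n
    using that by (intro member_le_sum) auto
  then show ?thesis
    by (intro exI[of _ "\<lambda>n. \<Sum>j\<le>n. h j n"]) blast
qed

lemma sigma_liminf_centered_forced_dominated_bounded: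
  assumes po: "is_poset P le" and sl: "sigma_liminf_centered P le" and rn: "real_name P le D"
  shows "\<exists>g. \<forall>r\<in>P. \<forall>f. forces_dominated P le D r f \<longrightarrow> (\<exists>k. \<forall>n\<ge>k. f n \<le> g n)"
proof -
  obtain C :: "nat \<Rightarrow> 'a set" where C: "P = (\<Union>i. C i)" "\<And>i. liminf_centered P le (C i)"
    using sl unfolding sigma_liminf_centered_def by blast
  obtain h where h: "\<And>i. \<forall>r\<in>C i. \<forall>f. forces_dominated P le D r f \<longrightarrow> (\<exists>k. \<forall>n\<ge>k. f n < h i n)"
    using liminf_centered_forced_dominated_bounded[OF po C(2) rn] by metis
  obtain g where g: "\<And>i n. i \<le> n \<Longrightarrow> h i n \<le> g n"
    using diagonal_dominates by blast
  have "\<exists>k. \<forall>n\<ge>k. f n \<le> g n" if "r \<in> P" and "forces_dominated P le D r f" for r f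
  proof -
    obtain i where "r \<in> C i"
      using \<open>r \<in> P\<close> C(1) by blast
    then obtain k where k: "\<forall>n\<ge>k. f n < h i n"
      using h \<open>forces_dominated P le D r f\<close> by blast
    have "f n \<le> g n" if "n \<ge> max k i" for n
    proof -
      have "f n < h i n"
        using k that by simp
      also have "h i n \<le> g n"
        using g that by simp
      finally show ?thesis by simp
    qed
    then show ?thesis by blast
  qed
  then show ?thesis by blast
qed

lemma forces_dominated_below_if_not_forces_not_dominated:
  assumes "\<not> forces_not_dominated P le D p f"
  shows "\<exists>r\<in>P. le r p \<and> forces_dominated P le D r f"
  using assms unfolding forces_not_dominated_def forces_dominated_def by (meson not_le)

lemma forces_not_dominated_imp_not_forces_dominated:
  assumes "forces_not_dominated P le D q f" and "q' \<in> P" and "le q' q"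
  shows "\<not> forces_dominated P le D q' f"
  using assms unfolding forces_not_dominated_def forces_dominated_def by (meson not_le)

lemma sigma_liminf_centered_preserves_unbounded:
  assumes po: "is_poset P le" and sl: "sigma_liminf_centered P le" and "unbounded F"
  shows "preserves_unbounded P le F"
  unfolding preserves_unbounded_def
proof (intro allI impI ballI)
  fix D p
  assume rn: "real_name P le D" and "p \<in> P"
  obtain g where g: "\<forall>r\<in>P. \<forall>f. forces_dominated P le D r f \<longrightarrow> (\<exists>k. \<forall>n\<ge>k. f n \<le> g n)"
    using sigma_liminf_centered_forced_dominated_bounded[OF po sl rn] by blast
  have "\<not> (\<forall>f\<in>F. \<exists>k. \<forall>n\<ge>k. f n \<le> g n)"
    using \<open>unbounded F\<close> unfolding unbounded_def by blast
  then obtain f where "f \<in> F" and undominated: "\<not> (\<exists>k. \<forall>n\<ge>k. f n \<le> g n)"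
    by blast
  have "forces_not_dominated P le D p f"
  proof (rule ccontr)
    assume "\<not> forces_not_dominated P le D p f"
    then obtain r where "r \<in> P" "forces_dominated P le D r f"
      using forces_dominated_below_if_not_forces_not_dominated[of P le D p f] by blast
    with g have "\<exists>k. \<forall>n\<ge>k. f n \<le> g n"
      by blast
    with undominated show False ..
  qed
  moreover have "le p p"
    using po \<open>p \<in> P\<close> unfolding is_poset_def by blast
  ultimately show "\<exists>q\<in>P. le q p \<and> (\<exists>f\<in>F. forces_not_dominated P le D q f)"
    using \<open>p \<in> P\<close> \<open>f \<in> F\<close> by blast
qed

lemma unbounded_UNIV: "unbounded (UNIV :: (nat \<Rightarrow> nat) set)"
  unfolding unbounded_def
proof
  assume "\<exists>g :: nat \<Rightarrow> nat. \<forall>f\<in>UNIV. \<exists>k. \<forall>n\<ge>k. f n \<le> g n"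
  then obtain g :: "nat \<Rightarrow> nat" where "\<forall>f. \<exists>k. \<forall>n\<ge>k. f n \<le> g n"
    by blast
  then have "\<exists>k. \<forall>n\<ge>k. (\<lambda>n. Suc (g n)) n \<le> g n"
    by (rule spec)
  then show False by auto
qed

lemma not_adds_dominating_real_if_preserves_unbounded:
  assumes "preserves_unbounded P le UNIV"
  shows "\<not> adds_dominating_real P le"
proof
  assume "adds_dominating_real P le"
  then obtain D p where rn: "real_name P le D" and "p \<in> P"
    and dom: "\<forall>f. \<forall>r\<in>P. le r p \<longrightarrow> (\<exists>q\<in>P. le q r \<and> forces_dominated P le D q f)"
    unfolding adds_dominating_real_def by blast
  obtain q f where "q \<in> P" "le q p" and "forces_not_dominated P le D q f"
    using assms rn \<open>p \<in> P\<close> unfolding preserves_unbounded_def by blast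
  moreover obtain q' where "q' \<in> P" "le q' q" "forces_dominated P le D q' f"
    using dom \<open>q \<in> P\<close> \<open>le q p\<close> by blast
  ultimately show False
    using forces_not_dominated_imp_not_forces_dominated[of P le D q f q'] by blast
qed

theorem theorem3p8:
  fixes P :: "'a set" and le :: "'a \<Rightarrow> 'a \<Rightarrow> bool"
  assumes "is_poset P le"
    and "sigma_liminf_centered P le"
  shows "\<not> adds_dominating_real P le
     \<and> (\<forall>F :: (nat \<Rightarrow> nat) set. unbounded F \<longrightarrow> preserves_unbounded P le F)"
proof
  show preserves: "\<forall>F :: (nat \<Rightarrow> nat) set. unbounded F \<longrightarrow> preserves_unbounded P le F"
    using sigma_liminf_centered_preserves_unbounded[OF assms] by blast
  show "\<not> adds_dominating_real P le"
    using preserves unbounded_UNIV by (intro not_adds_dominating_real_if_preserves_unbounded) blast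
qed

end
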